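(* Fix $t\in\{1,\dots,M\}$, corresponding to the pair $(i,j)$ with $C_t=C_{i,j}$, and let $z^*=(x^*,y^* )\in F(\mathcal{T}_t)$. Define $$r_t=\begin{cases}\min\Big\{d_{sep}(z^*,C_t),\ \dfrac{d_{sep}(z^*,C_t)+d_{esc}(z^*,C_t)}{2}\Big\}, & \text{if } |K_t(z^* )|=1,\\[2mm] \min\{g(x_i^*,x_j^*,w_i,w_j),\ g(y_i^*,y_j^*,h_i,h_j)\}, & \text{if } |K_t(z^* )|=2,\end{cases}$$ where $g(a,b,c,d)=|(a-b)+(c-d)/2|/\sqrt{2}$. Then every $z\in B(z^*,r_t)$ satisfies $K_t(z)\subseteq K_t(z^* )$.
   Context: Fix reals $W,H>0$, integers $N\ge N_m\ge 2$, and widths $w_i>0$, heights $h_i>0$ for $1\le i\le N_m$. Points of $\mathbb{R}^{2N}$ are written $z=(x,y)$ with $x=(x_1,\dots,x_N)$, $y=(y_1,\dots,y_N)$. For $1\le i\le N_m$ let $B_i^x=\{z: 0\le x_i\le W-w_i\}$, $B_i^y=\{z: 0\le y_i\le H-h_i\}$; for $i\neq j$ let $B_{i,j}=B_i^x\cap B_i^y\cap B_j^x\cap B_j^y$, $O^x_{i,j}=\{z: x_i+w_i\le x_j\}$, $O^y_{i,j}=\{z: y_i+h_i\le y_j\}$. Define the closed convex sets $C_{i,j,\mathsf{L}}=O^x_{i,j}\cap B_{i,j}$, $C_{i,j,\mathsf{R}}=O^x_{j,i}\cap B_{i,j}$, $C_{i,j,\mathsf{B}}=O^y_{i,j}\cap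 B_{i,j}$, $C_{i,j,\mathsf{A}}=O^y_{j,i}\cap B_{i,j}$ (assumed nonempty) and $C_{i,j}=C_{i,j,\mathsf{L}}\cup C_{i,j,\mathsf{R}}\cup C_{i,j,\mathsf{B}}\cup C_{i,j,\mathsf{A}}$. Enumerate the pairs $1\le i<j\le N_m$ by $t=1,\dots,M$ and write $C_t=C_{i,j}$, $C_{t,k}=C_{i,j,k}$. With the Euclidean norm and $\mathrm{d}(z,C)=\inf_{c\in C}\|z-c\|$: $\mathcal{P}_t(z)=\{c\in C_t:\|z-c\|=\mathrm{d}(z,C_t)\}$, $P_{t,k}(z)$ is the unique nearest point of $C_{t,k}$ to $z$; for a fixed $\lambda\in(0,2)$, $\mathcal{T}_t(z)=\{z+\lambda(p-z):p\in\mathcal{P}_t(z)\}$, $F(\mathcal{T}_t)=\{z: z\in\mathcal{T}_t(z)\}$. Active indices: $K_t(z)=\{k\in\{\mathsf{L},\mathsf{R},\mathsf{B},\mathsf{A}\}: P_{t,k}(z)\in\mathcal{P}_t(z)\}$ (for $z^*\in F(\mathcal{T}_t)$ one has $|K_t(z^* )|\in\{1,2\}$). $d_{esc}(z^*,C_t)=\inf\{\|z-z^*\| : z\notin C_{t,k}\text{ for some }k\in K_t(z^* )\}$; $d_{sep}(z^*,C_t)=\min\{\mathrm{d}(z^*,C_{t,k}) : k\notin K_t(z^* )\}$. $B(z,r)$ is the open Euclidean ball (empty if $r=0$). *)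

theory Defs
  imports "HOL-Analysis.Analysis"
begin

text \<open>Points of R^(2N) are pairs (x,y) of vectors in real^'n, where the finite
  linearly ordered index type 'n plays the role of {1..N}.  The norm on the
  product type is the Euclidean norm sqrt(|x|^2+|y|^2).\<close>

type_synonym ('n) pt = "(real ^ 'n) \<times> (real ^ 'n)"

datatype lbl = Lf | Rt | Bw | Ab

definition Bx :: "real \<Rightarrow> ('n::finite \<Rightarrow> real) \<Rightarrow> 'n \<Rightarrow> 'n pt set" where
  "Bx W w i = {z. 0 \<le> fst z $ i \<and> fst z $ i \<le> W - w i}"

definition By :: "real \<Rightarrow> ('n::finite \<Rightarrow> real) \<Rightarrow> 'n \<Rightarrow> 'n pt set" where
  "By H h i = {z. 0 \<le> snd z $ i \<and> snd z $ i \<le> H - h i}"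

definition Bij :: "real \<Rightarrow> real \<Rightarrow> ('n::finite \<Rightarrow> real) \<Rightarrow> ('n \<Rightarrow> real) \<Rightarrow> 'n \<Rightarrow> 'n \<Rightarrow> 'n pt set" where
  "Bij W H w h i j = Bx W w i \<inter> By H h i \<inter> Bx W w j \<inter> By H h j"

definition Ox :: "('n::finite \<Rightarrow> real) \<Rightarrow> 'n \<Rightarrow> 'n \<Rightarrow> 'n pt set" where
  "Ox w i j = {z. fst z $ i + w i \<le> fst z $ j}"

definition Oy :: "('n::finite \<Rightarrow> real) \<Rightarrow> 'n \<Rightarrow> 'n \<Rightarrow> 'n pt set" where
  "Oy h i j = {z. snd z $ i + h i \<le> snd z $ j}"

definition Cpiece :: "real \<Rightarrow> real \<Rightarrow> ('n::finite \<Rightarrow> real) \<Rightarrow> ('n \<Rightarrow> real) \<Rightarrow> 'n \<Rightarrow> 'n \<Rightarrow> lbl \<Rightarrow> 'n pt set" where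
  "Cpiece W H w h i j k = (case k of
      Lf \<Rightarrow> Ox w i j \<inter> Bij W H w h i j
    | Rt \<Rightarrow> Ox w j i \<inter> Bij W H w h i j
    | Bw \<Rightarrow> Oy h i j \<inter> Bij W H w h i j
    | Ab \<Rightarrow> Oy h j i \<inter> Bij W H w h i j)"

definition Cpair :: "real \<Rightarrow> real \<Rightarrow> ('n::finite \<Rightarrow> real) \<Rightarrow> ('n \<Rightarrow> real) \<Rightarrow> 'n \<Rightarrow> 'n \<Rightarrow> 'n pt set" where
  "Cpair W H w h i j = (\<Union>k. Cpiece W H w h i j k)"

definition Pset :: "'a::metric_space set \<Rightarrow> 'a \<Rightarrow> 'a set" where
  "Pset C z = {c \<in> C. dist z c = infdist z C}"

definition Tmap :: "real \<Rightarrow> 'a::real_normed_vector set \<Rightarrow> 'a \<Rightarrow> 'a set" where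
  "Tmap lam C z = {z + lam *\<^sub>R (p - z) | p. p \<in> Pset C z}"

definition FixT :: "real \<Rightarrow> 'a::real_normed_vector set \<Rightarrow> 'a set" where
  "FixT lam C = {z. z \<in> Tmap lam C z}"

text \<open>Active indices: P_{t,k}(z) is the (unique) nearest point of the closed convex
  set C_{t,k}, i.e. the library's closest_point.\<close>
definition Kact :: "real \<Rightarrow> real \<Rightarrow> ('n::finite \<Rightarrow> real) \<Rightarrow> ('n \<Rightarrow> real) \<Rightarrow> 'n \<Rightarrow> 'n \<Rightarrow> 'n pt \<Rightarrow> lbl set" where
  "Kact W H w h i j z =
     {k. closest_point (Cpiece W H w h i j k) z \<in> Pset (Cpair W H w h i j) z}"

definition d_esc :: "real \<Rightarrow> real \<Rightarrow> ('n::finite \<Rightarrow> real) \<Rightarrow> ('n \<Rightarrow> real) \<Rightarrow> 'n \<Rightarrow> 'n \<Rightarrow> 'n pt \<Rightarrow> real" where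
  "d_esc W H w h i j zs =
     Inf {norm (z - zs) | z. \<exists>k \<in> Kact W H w h i j zs. z \<notin> Cpiece W H w h i j k}"

definition d_sep :: "real \<Rightarrow> real \<Rightarrow> ('n::finite \<Rightarrow> real) \<Rightarrow> ('n \<Rightarrow> real) \<Rightarrow> 'n \<Rightarrow> 'n \<Rightarrow> 'n pt \<Rightarrow> real" where
  "d_sep W H w h i j zs =
     Min {infdist zs (Cpiece W H w h i j k) | k. k \<notin> Kact W H w h i j zs}"

definition gfun :: "real \<Rightarrow> real \<Rightarrow> real \<Rightarrow> real \<Rightarrow> real" where
  "gfun a b c d = \<bar>(a - b) + (c - d) / 2\<bar> / sqrt 2"

text \<open>The radius r_t.  It is only defined by the paper when |K_t(z*)| is 1 or 2
  (which holds at fixed points); otherwise we put 0 (empty ball).\<close>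
definition rad :: "real \<Rightarrow> real \<Rightarrow> ('n::finite \<Rightarrow> real) \<Rightarrow> ('n \<Rightarrow> real) \<Rightarrow> 'n \<Rightarrow> 'n \<Rightarrow> 'n pt \<Rightarrow> real" where
  "rad W H w h i j zs =
     (if card (Kact W H w h i j zs) = 1 then
        min (d_sep W H w h i j zs) ((d_sep W H w h i j zs + d_esc W H w h i j zs) / 2)
      else if card (Kact W H w h i j zs) = 2 then
        min (gfun (fst zs $ i) (fst zs $ j) (w i) (w j))
            (gfun (snd zs $ i) (snd zs $ j) (h i) (h j))
      else 0)"

end

theory Submission
  imports Defs
begin

text \<open>At a fixed point zs of the relaxed projection, zs lies in C_t, so the active pieces at
  zs are exactly those containing zs. A piece C_{t,k} not containing zs is inactive at z as soon
  as every point of it has a strictly closer point of C_t. With a single active piece C_{t,k0},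
  moving from zs towards z inside the escape ball gives a point of C_{t,k0} at distance less than
  d_sep - dist zs z \<le> infdist z C_{t,k}. With two active pieces, zs lies in one x-piece and one
  y-piece; g is the distance from zs to the bisector between the active half-plane and the
  opposite one in the (x_i, x_j)-plane (resp. (y_i, y_j)-plane), and below that radius the
  projection of z onto the boundary line of the active half-plane, clamped to a segment below
  zs, beats the whole opposite piece.\<close>

lemma exists_near_point_if_ball_subset:
  fixes zs z :: "'a::real_normed_vector"
  assumes "zs \<in> A" and "ball zs e \<subseteq> A" and "0 < r" and "dist zs z - e < r"
  shows "\<exists>p \<in> A. dist z p < r"
proof (cases "dist zs z < r")
  case True
  then show ?thesis using assms(1) by (auto simp: dist_commute)
next
  case False
  define t where "t = dist zs z"
  define s where "s = (t - r + min e t) / 2"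
  define p where "p = zs + (s / t) *\<^sub>R (z - zs)"
  have t: "t > 0" and s: "t - r < s" "s < e" "s \<le> t" "0 \<le> s"
    using False assms(3,4) by (auto simp: t_def s_def)
  have "dist zs p = s / t * t" using s by (simp add: p_def t_def dist_norm norm_minus_commute)
  then have "p \<in> A" using t s assms(2) by auto
  moreover have "z - p = (1 - s / t) *\<^sub>R (z - zs)" by (simp add: p_def algebra_simps)
  then have "dist z p = (1 - s / t) * t"
    using t s by (simp add: dist_norm t_def norm_minus_commute)
  then have "dist z p < r" using t s by (simp add: algebra_simps)
  ultimately show ?thesis by blast
qed

lemma exists_closer_point_if_ball_subset:
  fixes zs z q :: "'a::real_normed_vector"
  assumes "zs \<in> A" and "ball zs e \<subseteq> A" and "q \<in> B" and "d \<le> infdist zs B"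
    and "dist zs z < d" and "2 * dist zs z < d + e"
  shows "\<exists>p \<in> A. dist z p < dist z q"
proof -
  have "0 < d - dist zs z" and "dist zs z - e < d - dist zs z" using assms(5,6) by linarith+
  then obtain p where "p \<in> A" and p: "dist z p < d - dist zs z"
    using exists_near_point_if_ball_subset[OF assms(1,2)] by blast
  have "d - dist zs z \<le> infdist z B"
    using assms(4) infdist_triangle[of zs B z] by (simp add: dist_commute)
  also have "\<dots> \<le> dist z q" using assms(3) by (rule infdist_le)
  finally have "dist z p < dist z q" using p by linarith
  with \<open>p \<in> A\<close> show ?thesis by blast
qed

lemma FixT_subset: "lam \<noteq> 0 \<Longrightarrow> FixT lam C \<subseteq> C"
  by (auto simp: FixT_def Tmap_def Pset_def)

lemma Pset_of_mem: "z \<in> C \<Longrightarrow> Pset C z = {z}"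
  by (auto simp: Pset_def)

lemma Pset_disjoint_if_closer:
  assumes "\<And>q. q \<in> A \<Longrightarrow> \<exists>p \<in> C. dist z p < dist z q"
  shows "A \<inter> Pset C z = {}"
proof -
  have False if "q \<in> A" and "q \<in> Pset C z" for q
  proof -
    obtain p where "p \<in> C" and "dist z p < dist z q" using assms \<open>q \<in> A\<close> by blast
    moreover have "dist z q = infdist z C" using \<open>q \<in> Pset C z\<close> by (simp add: Pset_def)
    ultimately show False using infdist_le[of p C z] by simp
  qed
  then show ?thesis by blast
qed

lemma sq_dist_clamped_less:
  fixes s d m P :: real
  assumes P: "P > 0" and m: "m \<ge> 0" and s: "s < m + P"
    and hyp: "s\<^sup>2 + d\<^sup>2 < (m + P)\<^sup>2"
  shows "(s - m)\<^sup>2 + (d - max (- m) (min m d))\<^sup>2 < (m + 2 * P - s)\<^sup>2"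
proof (cases "\<bar>d\<bar> \<le> m")
  case True
  then have "max (- m) (min m d) = d" by auto
  moreover have "(s - m)\<^sup>2 < (m + 2 * P - s)\<^sup>2"
  proof -
    have "\<bar>s - m\<bar> < m + 2 * P - s" using s P m by (simp add: abs_if)
    then have "\<bar>s - m\<bar>\<^sup>2 < (m + 2 * P - s)\<^sup>2" by (intro power_strict_mono) auto
    then show ?thesis by simp
  qed
  ultimately show ?thesis by simp
next
  case False
  then have "\<bar>d - max (- m) (min m d)\<bar> = \<bar>d\<bar> - m" using m by (auto simp: abs_if)
  then have "(d - max (- m) (min m d))\<^sup>2 = (\<bar>d\<bar> - m)\<^sup>2" by (metis power2_abs)
  moreover have "(s - m)\<^sup>2 + (\<bar>d\<bar> - m)\<^sup>2 - (m + 2 * P - s)\<^sup>2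
      = s\<^sup>2 + d\<^sup>2 - (m + P)\<^sup>2 - ((s - P)\<^sup>2 + 2 * P * (m + P - s) + 2 * m * (\<bar>d\<bar> - m))"
    by (simp add: power2_eq_square algebra_simps)
  moreover have "0 \<le> (s - P)\<^sup>2 + 2 * P * (m + P - s) + 2 * m * (\<bar>d\<bar> - m)"
    using False s P m by (intro add_nonneg_nonneg) auto
  ultimately show ?thesis using hyp by linarith
qed

text \<open>The points (a0 + alpha, a0 + u + alpha) with 0 \<le> alpha \<le> m = b0 - a0 - u form the segment
  of the line b = a + u below (a0, b0); alpha projects (a, b) onto this line and clamps to the
  segment. In the rotated coordinates s, d the segment is s = m, |d| \<le> m, and q lies in the
  half-plane s \<ge> m + 2 P.\<close>
lemma ordered_segment_closer:
  fixes a0 b0 a b qa qb u v :: real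
  assumes u: "u > 0" and v: "v > 0" and ordered: "a0 + u \<le> b0" and q: "qb + v \<le> qa"
    and near: "2 * ((a - a0)\<^sup>2 + (b - b0)\<^sup>2) < (b0 - a0 + (v - u) / 2)\<^sup>2"
  shows "\<exists>\<alpha> \<ge> 0. a0 + u + \<alpha> \<le> b0 \<and>
           (a - (a0 + \<alpha>))\<^sup>2 + (b - (a0 + u + \<alpha>))\<^sup>2 < (a - qa)\<^sup>2 + (b - qb)\<^sup>2"
proof -
  define m where "m = b0 - a0 - u"
  define P where "P = (u + v) / 2"
  define s where "s = (a - a0) - (b - b0)"
  define d where "d = (a - a0) + (b - b0)"
  define D where "D = max (- m) (min m d)"
  define \<alpha> where "\<alpha> = (m + D) / 2"
  have m: "m \<ge> 0" and P: "P > 0" using ordered u v by (simp_all add: m_def P_def)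
  have "s\<^sup>2 + d\<^sup>2 = 2 * ((a - a0)\<^sup>2 + (b - b0)\<^sup>2)"
    by (simp add: s_def d_def power2_eq_square algebra_simps)
  moreover have "m + P = b0 - a0 + (v - u) / 2" by (simp add: m_def P_def field_simps)
  ultimately have hyp: "s\<^sup>2 + d\<^sup>2 < (m + P)\<^sup>2" using near by simp
  have "s\<^sup>2 < (m + P)\<^sup>2" using hyp zero_le_power2[of d] by linarith
  then have s: "s < m + P" using P m power2_less_imp_less by fastforce
  then have gap: "0 < m + 2 * P - s" using P by simp
  have gap_eq: "m + 2 * P - s = v + b - a" by (simp add: m_def P_def s_def field_simps)
  have "2 * ((a - (a0 + \<alpha>))\<^sup>2 + (b - (a0 + u + \<alpha>))\<^sup>2) = (s - m)\<^sup>2 + (d - D)\<^sup>2"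
    by (simp add: \<alpha>_def s_def d_def m_def power2_eq_square algebra_simps)
  also have "\<dots> < (m + 2 * P - s)\<^sup>2"
    unfolding D_def using sq_dist_clamped_less[OF P m s hyp] .
  also have "\<dots> \<le> ((b - qb) - (a - qa))\<^sup>2"
    using q gap gap_eq by (intro power_mono) linarith+
  also have "\<dots> \<le> 2 * ((a - qa)\<^sup>2 + (b - qb)\<^sup>2)"
    using zero_le_power2[of "(a - qa) + (b - qb)"] by (simp add: power2_eq_square algebra_simps)
  finally have "(a - (a0 + \<alpha>))\<^sup>2 + (b - (a0 + u + \<alpha>))\<^sup>2 < (a - qa)\<^sup>2 + (b - qb)\<^sup>2" by simp
  moreover have "- m \<le> D" and "D \<le> m" using m by (auto simp: D_def)
  then have "\<alpha> \<ge> 0" and "a0 + u + \<alpha> \<le> b0" by (auto simp: \<alpha>_def m_def field_simps)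
  ultimately show ?thesis by blast
qed

lemma norm_sq_vec_split_two:
  fixes x :: "real^'n"
  assumes "i \<noteq> j"
  shows "(norm x)\<^sup>2 = (x$i)\<^sup>2 + (x$j)\<^sup>2 + (\<Sum>k\<in>-{i, j}. (x$k)\<^sup>2)"
proof -
  have "(norm x)\<^sup>2 = (\<Sum>k\<in>UNIV. (x$k)\<^sup>2)"
    unfolding power2_norm_eq_inner by (simp add: inner_vec_def power2_eq_square)
  also have "\<dots> = (\<Sum>k\<in>{i, j}. (x$k)\<^sup>2) + (\<Sum>k\<in>-{i, j}. (x$k)\<^sup>2)"
    by (subst sum.union_disjoint[symmetric]) auto
  finally show ?thesis using assms by simp
qed

lemma two_coords_sq_le_dist_sq:
  fixes x y :: "real^'n"
  assumes "i \<noteq> j"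
  shows "(x$i - y$i)\<^sup>2 + (x$j - y$j)\<^sup>2 \<le> (dist x y)\<^sup>2"
  using norm_sq_vec_split_two[OF assms, of "x - y"]
  by (simp add: dist_norm sum_nonneg)

lemma dist_less_if_two_coords_closer:
  fixes y p q :: "real^'n"
  assumes "i \<noteq> j" and "\<And>k. k \<noteq> i \<Longrightarrow> k \<noteq> j \<Longrightarrow> p$k = q$k"
    and "(y$i - p$i)\<^sup>2 + (y$j - p$j)\<^sup>2 < (y$i - q$i)\<^sup>2 + (y$j - q$j)\<^sup>2"
  shows "dist y p < dist y q"
proof -
  have "(\<Sum>k\<in>-{i, j}. ((y - p)$k)\<^sup>2) = (\<Sum>k\<in>-{i, j}. ((y - q)$k)\<^sup>2)"
    using assms(2) by (intro sum.cong) auto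
  then have "(norm (y - p))\<^sup>2 < (norm (y - q))\<^sup>2"
    using assms(3) norm_sq_vec_split_two[OF assms(1), of "y - p"]
      norm_sq_vec_split_two[OF assms(1), of "y - q"] by simp
  then show ?thesis unfolding dist_norm by (rule power2_less_imp_less) simp
qed

lemma gfun_swap: "gfun a b c d = gfun b a d c"
proof -
  have "(b - a) + (d - c) / 2 = - ((a - b) + (c - d) / 2)" by (simp add: field_simps)
  then show ?thesis unfolding gfun_def by (metis abs_minus_cancel)
qed

text \<open>In the (i, j)-coordinate plane, gfun (y0$i) (y0$j) u v is the distance from y0 to the
  bisector of the half-planes y$i + u \<le> y$j and y$j + v \<le> y$i.\<close>
lemma vec_ordered_pair_closer:
  fixes y0 y q :: "real^'n"
  assumes ij: "i \<noteq> j" and u: "u > 0" and v: "v > 0"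
    and ordered: "y0$i + u \<le> y0$j" and q: "q$j + v \<le> q$i"
    and near: "dist y0 y < gfun (y0$i) (y0$j) u v"
  shows "\<exists>p. y0$i \<le> p$i \<and> p$j \<le> y0$j \<and> p$i + u = p$j \<and> dist y p < dist y q"
proof -
  define G where "G = y0$j - y0$i + (v - u) / 2"
  have "G > 0" unfolding G_def using ordered u v by (simp add: field_simps)
  then have "gfun (y0$i) (y0$j) u v = G / sqrt 2"
    by (simp add: gfun_def G_def abs_minus_commute field_simps)
  then have "2 * (dist y0 y)\<^sup>2 < G\<^sup>2"
    using near power_strict_mono[OF near, of 2] by (simp add: power_divide)
  moreover have "(y$i - y0$i)\<^sup>2 + (y$j - y0$j)\<^sup>2 \<le> (dist y0 y)\<^sup>2"
    using two_coords_sq_le_dist_sq[OF ij, of y y0] by (simp add: dist_commute)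
  ultimately have "2 * ((y$i - y0$i)\<^sup>2 + (y$j - y0$j)\<^sup>2) < G\<^sup>2" by (smt (verit))
  then obtain \<alpha> where \<alpha>: "\<alpha> \<ge> 0" "y0$i + u + \<alpha> \<le> y0$j"
    and closer: "(y$i - (y0$i + \<alpha>))\<^sup>2 + (y$j - (y0$i + u + \<alpha>))\<^sup>2 < (y$i - q$i)\<^sup>2 + (y$j - q$j)\<^sup>2"
    using ordered_segment_closer[OF u v ordered q] unfolding G_def by blast
  define p where "p = (\<chi> k. if k = i then y0$i + \<alpha> else if k = j then y0$i + u + \<alpha> else q$k)"
  have "dist y p < dist y q"
    using ij closer by (intro dist_less_if_two_coords_closer[OF ij]) (auto simp: p_def)
  then show ?thesis using ij \<alpha> by (intro exI[of _ p]) (simp add: p_def)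
qed

lemma dist_replace_fst_less:
  "dist (fst z) x < dist (fst z) (fst q) \<Longrightarrow> dist z (x, snd q) < dist z q"
  by (simp add: dist_prod_def power_strict_mono)

lemma dist_replace_snd_less:
  "dist (snd z) y < dist (snd z) (snd q) \<Longrightarrow> dist z (fst q, y) < dist z q"
  by (simp add: dist_prod_def power_strict_mono)

instance lbl :: finite
proof
  have "(UNIV :: lbl set) = {Lf, Rt, Bw, Ab}" using lbl.exhaust by blast
  then show "finite (UNIV :: lbl set)" by (metis finite.emptyI finite_insert)
qed

lemma closed_Cpiece: "closed (Cpiece W H w h i j k)"
  unfolding Cpiece_def Ox_def Oy_def Bij_def Bx_def By_def
  by (cases k) (auto intro!: closed_Collect_conj closed_Collect_le continuous_intros)

lemma Cpiece_subset_Cpair: "Cpiece W H w h i j k \<subseteq> Cpair W H w h i j"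
  by (auto simp: Cpair_def)

lemma Cpiece_swap:
  shows "Cpiece W H w h j i Lf = Cpiece W H w h i j Rt"
    and "Cpiece W H w h j i Rt = Cpiece W H w h i j Lf"
    and "Cpiece W H w h j i Bw = Cpiece W H w h i j Ab"
    and "Cpiece W H w h j i Ab = Cpiece W H w h i j Bw"
  by (auto simp: Cpiece_def Bij_def)

lemma Kact_eq_if_mem_Cpair:
  assumes "zs \<in> Cpair W H w h i j" and "\<And>k. Cpiece W H w h i j k \<noteq> {}"
  shows "Kact W H w h i j zs = {k. zs \<in> Cpiece W H w h i j k}"
proof -
  have "closest_point (Cpiece W H w h i j k) zs = zs \<longleftrightarrow> zs \<in> Cpiece W H w h i j k" for k
    using closest_point_refl[OF closed_Cpiece assms(2)] .
  then show ?thesis using assms(1) by (simp add: Kact_def Pset_of_mem)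
qed

lemma notin_Kact_if_closer:
  assumes "Cpiece W H w h i j k \<noteq> {}"
    and "\<And>q. q \<in> Cpiece W H w h i j k \<Longrightarrow> \<exists>p \<in> Cpair W H w h i j. dist z p < dist z q"
  shows "k \<notin> Kact W H w h i j z"
proof -
  have "closest_point (Cpiece W H w h i j k) z \<in> Cpiece W H w h i j k"
    by (rule closest_point_in_set[OF closed_Cpiece assms(1)])
  then have "closest_point (Cpiece W H w h i j k) z \<notin> Pset (Cpair W H w h i j) z"
    using Pset_disjoint_if_closer[OF assms(2)] by blast
  then show ?thesis by (simp add: Kact_def)
qed

lemma ball_d_esc_subset:
  assumes "k \<in> Kact W H w h i j zs"
  shows "ball zs (d_esc W H w h i j zs) \<subseteq> Cpiece W H w h i j k"
proof
  fix y assume y: "y \<in> ball zs (d_esc W H w h i j zs)"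
  show "y \<in> Cpiece W H w h i j k"
  proof (rule ccontr)
    assume "y \<notin> Cpiece W H w h i j k"
    with assms have "norm (y - zs) \<in>
        {norm (z - zs) | z. \<exists>k \<in> Kact W H w h i j zs. z \<notin> Cpiece W H w h i j k}"
      by blast
    then have "d_esc W H w h i j zs \<le> norm (y - zs)"
      unfolding d_esc_def by (rule cInf_lower) (auto intro: bdd_belowI[of _ 0])
    with y show False by (simp add: dist_norm norm_minus_commute)
  qed
qed

lemma d_sep_le_infdist:
  "k \<notin> Kact W H w h i j zs \<Longrightarrow> d_sep W H w h i j zs \<le> infdist zs (Cpiece W H w h i j k)"
  unfolding d_sep_def by (rule Min_le) auto

lemma Cpiece_Lf_closer:
  assumes ij: "i \<noteq> j" and "w i > 0" and "w j > 0"
    and zs: "zs \<in> Cpiece W H w h i j Lf" and q: "q \<in> Cpiece W H w h i j Rt"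
    and near: "dist zs z < gfun (fst zs $ i) (fst zs $ j) (w i) (w j)"
  shows "\<exists>p \<in> Cpiece W H w h i j Lf. dist z p < dist z q"
proof -
  have "dist (fst zs) (fst z) < gfun (fst zs $ i) (fst zs $ j) (w i) (w j)"
    using dist_fst_le[of zs z] near by linarith
  moreover have "fst zs $ i + w i \<le> fst zs $ j" and "fst q $ j + w j \<le> fst q $ i"
    using zs q by (auto simp: Cpiece_def Ox_def)
  ultimately obtain x where x: "fst zs $ i \<le> x $ i" "x $ j \<le> fst zs $ j" "x $ i + w i = x $ j"
      and closer: "dist (fst z) x < dist (fst z) (fst q)"
    using vec_ordered_pair_closer[OF ij assms(2,3)] by blast
  have "(x, snd q) \<in> Cpiece W H w h i j Lf"
    using x zs q assms(2,3) by (auto simp: Cpiece_def Ox_def Bij_def Bx_def By_def)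
  with dist_replace_fst_less[OF closer] show ?thesis by blast
qed

lemma Cpiece_Bw_closer:
  assumes ij: "i \<noteq> j" and "h i > 0" and "h j > 0"
    and zs: "zs \<in> Cpiece W H w h i j Bw" and q: "q \<in> Cpiece W H w h i j Ab"
    and near: "dist zs z < gfun (snd zs $ i) (snd zs $ j) (h i) (h j)"
  shows "\<exists>p \<in> Cpiece W H w h i j Bw. dist z p < dist z q"
proof -
  have "dist (snd zs) (snd z) < gfun (snd zs $ i) (snd zs $ j) (h i) (h j)"
    using dist_snd_le[of zs z] near by linarith
  moreover have "snd zs $ i + h i \<le> snd zs $ j" and "snd q $ j + h j \<le> snd q $ i"
    using zs q by (auto simp: Cpiece_def Oy_def)
  ultimately obtain y where y: "snd zs $ i \<le> y $ i" "y $ j \<le> snd zs $ j" "y $ i + h i = y $ j"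
      and closer: "dist (snd z) y < dist (snd z) (snd q)"
    using vec_ordered_pair_closer[OF ij assms(2,3)] by blast
  have "(fst q, y) \<in> Cpiece W H w h i j Bw"
    using y zs q assms(2,3) by (auto simp: Cpiece_def Oy_def Bij_def Bx_def By_def)
  with dist_replace_snd_less[OF closer] show ?thesis by blast
qed

lemma card_two_Cpiece_both_axes:
  assumes "w i > 0" and "w j > 0" and "h i > 0" and "h j > 0"
    and "card {k. zs \<in> Cpiece W H w h i j k} = 2"
  shows "zs \<in> Cpiece W H w h i j Lf \<or> zs \<in> Cpiece W H w h i j Rt"
    and "zs \<in> Cpiece W H w h i j Bw \<or> zs \<in> Cpiece W H w h i j Ab"
proof -
  have LR: "\<not> (zs \<in> Cpiece W H w h i j Lf \<and> zs \<in> Cpiece W H w h i j Rt)"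
    using assms(1,2) by (auto simp: Cpiece_def Ox_def)
  have BA: "\<not> (zs \<in> Cpiece W H w h i j Bw \<and> zs \<in> Cpiece W H w h i j Ab)"
    using assms(3,4) by (auto simp: Cpiece_def Oy_def)
  obtain k1 k2 where "{k. zs \<in> Cpiece W H w h i j k} = {k1, k2}" and "k1 \<noteq> k2"
    using assms(5) card_2_iff by metis
  then have "zs \<in> Cpiece W H w h i j k1" "zs \<in> Cpiece W H w h i j k2" "k1 \<noteq> k2" by auto
  then show "zs \<in> Cpiece W H w h i j Lf \<or> zs \<in> Cpiece W H w h i j Rt"
    and "zs \<in> Cpiece W H w h i j Bw \<or> zs \<in> Cpiece W H w h i j Ab"
    using LR BA by (cases k1; cases k2; simp)+
qed

lemma Cpair_closer_if_two_active:
  assumes ij: "i \<noteq> j" and pos: "w i > 0" "w j > 0" "h i > 0" "h j > 0"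
    and two: "card {k. zs \<in> Cpiece W H w h i j k} = 2"
    and zs: "zs \<notin> Cpiece W H w h i j k" and q: "q \<in> Cpiece W H w h i j k"
    and near_x: "dist zs z < gfun (fst zs $ i) (fst zs $ j) (w i) (w j)"
    and near_y: "dist zs z < gfun (snd zs $ i) (snd zs $ j) (h i) (h j)"
  shows "\<exists>p \<in> Cpair W H w h i j. dist z p < dist z q"
proof -
  note axes = card_two_Cpiece_both_axes[OF pos two]
  note swap = Cpiece_swap[where i = i and j = j]
  show ?thesis
  proof (cases k)
    case Lf
    have "\<exists>p \<in> Cpiece W H w h j i Lf. dist z p < dist z q"
    proof (rule Cpiece_Lf_closer[OF ij[symmetric] pos(2,1)])
      show "zs \<in> Cpiece W H w h j i Lf" using axes(1) zs Lf unfolding swap by blast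
      show "q \<in> Cpiece W H w h j i Rt" using q Lf unfolding swap by simp
      show "dist zs z < gfun (fst zs $ j) (fst zs $ i) (w j) (w i)" using near_x gfun_swap by metis
    qed
    then show ?thesis using Cpiece_subset_Cpair unfolding swap by blast
  next
    case Rt
    then have "\<exists>p \<in> Cpiece W H w h i j Lf. dist z p < dist z q"
      using Cpiece_Lf_closer[OF ij pos(1,2) _ _ near_x] axes(1) zs q by blast
    then show ?thesis using Cpiece_subset_Cpair by blast
  next
    case Bw
    have "\<exists>p \<in> Cpiece W H w h j i Bw. dist z p < dist z q"
    proof (rule Cpiece_Bw_closer[OF ij[symmetric] pos(4,3)])
      show "zs \<in> Cpiece W H w h j i Bw" using axes(2) zs Bw unfolding swap by blast
      show "q \<in> Cpiece W H w h j i Ab" using q Bw unfolding swap by simp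
      show "dist zs z < gfun (snd zs $ j) (snd zs $ i) (h j) (h i)" using near_y gfun_swap by metis
    qed
    then show ?thesis using Cpiece_subset_Cpair unfolding swap by blast
  next
    case Ab
    then have "\<exists>p \<in> Cpiece W H w h i j Bw. dist z p < dist z q"
      using Cpiece_Bw_closer[OF ij pos(3,4) _ _ near_y] axes(2) zs q by blast
    then show ?thesis using Cpiece_subset_Cpair by blast
  qed
qed

lemma Cpair_closer_within_rad:
  assumes ij: "i \<noteq> j" and pos: "w i > 0" "w j > 0" "h i > 0" "h j > 0"
    and K: "Kact W H w h i j zs = {k. zs \<in> Cpiece W H w h i j k}"
    and near: "dist zs z < rad W H w h i j zs" and k: "k \<notin> Kact W H w h i j zs"
    and q: "q \<in> Cpiece W H w h i j k"
  shows "\<exists>p \<in> Cpair W H w h i j. dist z p < dist z q"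
proof -
  let ?K = "Kact W H w h i j zs" and ?ds = "d_sep W H w h i j zs" and ?de = "d_esc W H w h i j zs"
  show ?thesis
  proof (cases "card ?K = 1")
    case True
    then obtain k0 where k0: "?K = {k0}" by (rule card_1_singletonE)
    have "dist zs z < ?ds" and "2 * dist zs z < ?ds + ?de"
      using near True by (simp_all add: rad_def)
    moreover have "zs \<in> Cpiece W H w h i j k0" using K k0 by blast
    moreover have "ball zs ?de \<subseteq> Cpiece W H w h i j k0" using ball_d_esc_subset k0 by blast
    ultimately have "\<exists>p \<in> Cpiece W H w h i j k0. dist z p < dist z q"
      by (intro exists_closer_point_if_ball_subset[OF _ _ q d_sep_le_infdist[OF k]])
    then show ?thesis using Cpiece_subset_Cpair by blast
  next
    case False
    with near have "card ?K = 2"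
      and "dist zs z < gfun (fst zs $ i) (fst zs $ j) (w i) (w j)"
      and "dist zs z < gfun (snd zs $ i) (snd zs $ j) (h i) (h j)"
      by (simp_all add: rad_def split: if_splits)
    with K k q show ?thesis using Cpair_closer_if_two_active[OF ij pos] by simp
  qed
qed

theorem mainTheorem7:
  fixes W H lam :: real
    and w h :: "'n::{finite, linorder} \<Rightarrow> real"
    and i j :: 'n
    and zs :: "'n pt"
  assumes "W > 0" and "H > 0"
    and "i < j"
    and "w i > 0" and "w j > 0" and "h i > 0" and "h j > 0"
    and "0 < lam" and "lam < 2"
    and "\<And>k. Cpiece W H w h i j k \<noteq> {}"
    and "zs \<in> FixT lam (Cpair W H w h i j)"
  shows "\<forall>z \<in> ball zs (rad W H w h i j zs). Kact W H w h i j z \<subseteq> Kact W H w h i j zs"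
proof (intro ballI subsetI)
  fix z k
  assume z: "z \<in> ball zs (rad W H w h i j zs)" and k: "k \<in> Kact W H w h i j z"
  have "zs \<in> Cpair W H w h i j" using assms(11) FixT_subset[of lam] assms(8) by blast
  then have K: "Kact W H w h i j zs = {k. zs \<in> Cpiece W H w h i j k}"
    using Kact_eq_if_mem_Cpair assms(10) by blast
  have ij: "i \<noteq> j" using assms(3) by simp
  show "k \<in> Kact W H w h i j zs"
  proof (rule ccontr)
    assume "k \<notin> Kact W H w h i j zs"
    then have "k \<notin> Kact W H w h i j z"
      using Cpair_closer_within_rad[OF ij assms(4-7) K] z
      by (intro notin_Kact_if_closer[OF assms(10)]) auto
    with k show False by contradiction
  qed
qed

end
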